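(* Let $G$ be a finite group and let $k$ be an integer with $2 \leq k < d(G)$. Then $G$ is $k$-flexible if and only if $G/\mathrm{Cyc}(G)$ is $k$-flexible.
   Context: For a finite group $H$, $d(H)$ denotes the minimal size of a generating set of $H$. For an integer $1 \leq k \leq d(H)$, a finite group $H$ is called $k$-flexible if for any $x_1,\dots,x_k \in H$ with $d(\langle x_1,\dots,x_k\rangle)=k$ there exist $x_{k+1},\dots,x_{d(H)} \in H$ such that $\langle x_1,\dots,x_{d(H)}\rangle = H$. The cycliciser of $G$ is $\mathrm{Cyc}(G) = \{c \in G \mid \langle c,g\rangle \text{ is cyclic for all } g \in G\}$; it is a normal subgroup of $G$. *)

theory Defs
  imports "HOL-Algebra.Algebra"
begin

definition min_gens :: "('a, 'b) monoid_scheme \<Rightarrow> nat" where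
  "min_gens H = (LEAST n. \<exists>S. S \<subseteq> carrier H \<and> finite S \<and> card S = n
                               \<and> generate H S = carrier H)"

text \<open>k-flexible (only meaningful for 1 <= k <= d(H); these bounds are part of the notion).
  Tuples x_1..x_k are lists of length k.\<close>
definition k_flexible :: "('a, 'b) monoid_scheme \<Rightarrow> nat \<Rightarrow> bool" where
  "k_flexible H k \<longleftrightarrow> 1 \<le> k \<and> k \<le> min_gens H \<and>
     (\<forall>xs. length xs = k \<and> set xs \<subseteq> carrier H
             \<and> min_gens (subgroup_generated H (set xs)) = k
        \<longrightarrow> (\<exists>ys. length ys = min_gens H - k \<and> set ys \<subseteq> carrier H
                  \<and> generate H (set (xs @ ys)) = carrier H))"

definition Cyc :: "('a, 'b) monoid_scheme \<Rightarrow> 'a set" where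
  "Cyc G = {c \<in> carrier G. \<forall>g \<in> carrier G. cyclic_group (subgroup_generated G {c, g})}"

end

theory Submission
  imports Defs "HOL-Computational_Algebra.Primes"
begin

text \<open>Every element lies in a cyclic subgroup \<open>\<langle>y\<rangle>\<close> containing \<open>Cyc G\<close>, so \<open>Cyc G\<close> is
  a central cyclic subgroup. Inside \<open>\<langle>y\<rangle>\<close>, an element \<open>x\<close> can be replaced by \<open>x c\<close> with \<open>c\<close> in
  a given subgroup \<open>\<langle>m\<rangle>\<close> so that \<open>\<langle>x c\<rangle>\<close> contains both \<open>x\<close> and \<open>m\<close>: this is the elementary
  fact that \<open>t\<close> can be chosen with \<open>gcd (a + t b) n = gcd (gcd a b) n\<close>. Hence a generating
  set of \<open>H Cyc(G)/Cyc(G)\<close> lifts to a generating set of \<open>H\<close> of the same size by twisting one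
  lifted generator, unless the set is empty, in which case \<open>H \<le> Cyc G\<close> is cyclic. So
  \<open>d(H) = d(H Cyc(G)/Cyc(G))\<close> whenever \<open>d(H) \<ge> 2\<close>; in particular \<open>d(G) = d(G/Cyc(G))\<close>, and
  \<open>k\<close>-tuples with \<open>d = k\<close> correspond under projection. A completion in \<open>G\<close> projects to one in
  the quotient; conversely a completion in the quotient is lifted and its first entry, which
  exists as \<open>k < d(G)\<close>, is twisted by an element of \<open>Cyc G\<close>.\<close>

lemma ex_coprime_add_mult:
  fixes a b n :: int
  assumes "n \<noteq> 0" and "coprime (gcd a b) n"
  shows "\<exists>t. coprime (a + t * b) n"
proof -
  define P where "P = {p \<in> prime_factors n. \<not> p dvd a}"
  have p_dvd_prod: "p dvd \<Prod>P \<longleftrightarrow> \<not> p dvd a" if p: "Factorial_Ring.prime p" "p dvd n" for p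
  proof
    assume "p dvd \<Prod>P"
    then obtain q where "q \<in> P" "p dvd q"
      unfolding P_def using prime_dvd_prod_iff[OF _ p(1), of _ id] by auto
    then show "\<not> p dvd a" using p(1) primes_dvd_imp_eq unfolding P_def by blast
  next
    assume "\<not> p dvd a"
    then have "p \<in> P" using p assms(1) unfolding P_def by (auto simp: in_prime_factors_iff)
    moreover have "finite P" unfolding P_def by simp
    ultimately show "p dvd \<Prod>P" by (rule dvd_prodI[rotated])
  qed
  have "coprime (a + \<Prod>P * b) n"
  proof (rule ccontr)
    assume "\<not> coprime (a + \<Prod>P * b) n"
    then obtain p where p: "Factorial_Ring.prime p" "p dvd gcd (a + \<Prod>P * b) n"
      using prime_divisor_exists[of "gcd (a + \<Prod>P * b) n"] assms(1)
      by (auto simp: coprime_iff_gcd_eq_1)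
    then have "p dvd n" "p dvd a + \<Prod>P * b" by auto
    show False
    proof (cases "p dvd a")
      case True
      then have "p dvd gcd a b"
        using p(1) p_dvd_prod \<open>p dvd n\<close> \<open>p dvd a + \<Prod>P * b\<close>
        by (auto simp: dvd_add_right_iff prime_dvd_mult_iff)
      then show False using assms(2) p(1) \<open>p dvd n\<close> coprime_common_divisor not_prime_unit by blast
    next
      case False
      then show False
        using p_dvd_prod[OF p(1) \<open>p dvd n\<close>] \<open>p dvd a + \<Prod>P * b\<close> by (simp add: dvd_add_left_iff)
    qed
  qed
  then show ?thesis by blast
qed

lemma ex_gcd_add_mult_eq:
  fixes a b n :: int
  assumes "n \<noteq> 0"
  shows "\<exists>t. gcd (a + t * b) n = gcd (gcd a b) n"
proof -
  define g where "g = gcd (gcd a b) n"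
  have "g > 0" using assms unfolding g_def by simp
  obtain a' b' n' where a': "a = g * a'" and b': "b = g * b'" and n': "n = g * n'"
    unfolding g_def by (meson dvd_def dvd_trans gcd_dvd1 gcd_dvd2)
  have "gcd (gcd (g * a') (g * b')) (g * n') = g"
    using g_def a' b' n' by simp
  then have "g * gcd (gcd a' b') n' = g"
    using \<open>g > 0\<close> by (simp add: gcd_mult_left abs_mult)
  then have "coprime (gcd a' b') n'"
    using \<open>g > 0\<close> by (simp add: coprime_iff_gcd_eq_1)
  moreover have "n' \<noteq> 0" using assms n' by simp
  ultimately obtain t where "coprime (a' + t * b') n'"
    using ex_coprime_add_mult by blast
  moreover have "a + t * b = g * (a' + t * b')" using a' b' by (simp add: algebra_simps)
  ultimately have "gcd (a + t * b) n = g"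
    using \<open>g > 0\<close> n' by (simp add: gcd_mult_left abs_mult coprime_iff_gcd_eq_1)
  then show ?thesis unfolding g_def by blast
qed

context group
begin

lemma generate_subgroup_eq:
  assumes "subgroup H G"
  shows "generate G H = H"
  using generateI[OF assms subset_refl] by blast

lemma int_pow_in_generate_int_pow:
  assumes "y \<in> carrier G" and "gcd e (int (ord y)) dvd f"
  shows "y [^] f \<in> generate G {y [^] e}"
proof -
  obtain u v where uv: "u * e + v * int (ord y) = gcd e (int (ord y))"
    using bezout_int by blast
  obtain w where w: "f = gcd e (int (ord y)) * w" using assms(2) by blast
  have "y [^] f = y [^] (e * (u * w))"
    unfolding int_pow_eq[OF assms(1)] w uv[symmetric] by (simp add: algebra_simps)
  also have "\<dots> = (y [^] e) [^] (u * w)" using assms(1) by (simp add: int_pow_pow)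
  finally show ?thesis using assms(1) by (auto simp: generate_pow)
qed

lemma ex_mult_generates_both:
  assumes "finite (carrier G)" and y: "y \<in> carrier G"
    and "x \<in> generate G {y}" and "m \<in> generate G {y}"
  shows "\<exists>c \<in> generate G {m}. x \<in> generate G {x \<otimes> c} \<and> m \<in> generate G {x \<otimes> c}"
proof -
  obtain a b :: int where x: "x = y [^] a" and m: "m = y [^] b"
    using assms(3,4) y by (auto simp: generate_pow)
  have "int (ord y) \<noteq> 0" using ord_ge_1[OF assms(1) y] by simp
  then obtain t where t: "gcd (a + t * b) (int (ord y)) = gcd (gcd a b) (int (ord y))"
    using ex_gcd_add_mult_eq by blast
  have xc: "x \<otimes> m [^] t = y [^] (a + t * b)"
    unfolding x m using y by (simp add: int_pow_pow int_pow_mult mult.commute)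
  have "m [^] t \<in> generate G {m}" using y m by (auto simp: generate_pow)
  moreover have "gcd (a + t * b) (int (ord y)) dvd a" "gcd (a + t * b) (int (ord y)) dvd b"
    unfolding t by (meson dvd_trans gcd_dvd1 gcd_dvd2)+
  then have "x \<in> generate G {x \<otimes> m [^] t}" "m \<in> generate G {x \<otimes> m [^] t}"
    unfolding xc unfolding x m using y by (blast intro: int_pow_in_generate_int_pow)+
  ultimately show ?thesis by blast
qed

lemma subgroup_of_generate_singleton_is_generate_singleton:
  assumes "finite (carrier G)" and y: "y \<in> carrier G"
    and M: "subgroup M G" and "M \<subseteq> generate G {y}"
  shows "\<exists>m \<in> M. M = generate G {m}"
proof -
  define b where "b = (LEAST b::nat. 0 < b \<and> y [^] b \<in> M)"
  have "0 < ord y \<and> y [^] ord y \<in> M"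
    using ord_ge_1[OF assms(1) y] y subgroup.one_closed[OF M] by simp
  then have b: "0 < b" "y [^] b \<in> M"
    unfolding b_def by (metis (mono_tags, lifting) LeastI)+
  have "M \<subseteq> generate G {y [^] b}"
  proof
    fix z assume "z \<in> M"
    then obtain i :: nat where i: "z = y [^] i"
      using assms(4) generate_pow_on_finite_carrier[OF assms(1) y] by auto
    have "z = y [^] (b * (i div b) + i mod b)" unfolding i by simp
    then have z: "z = (y [^] b) [^] (i div b) \<otimes> y [^] (i mod b)"
      using y by (simp only: nat_pow_mult[symmetric] nat_pow_pow)
    have "(y [^] b) [^] (i div b) \<in> M"
      using subgroup_int_pow_closed[OF M b(2), of "int (i div b)"] by (simp add: int_pow_int)
    moreover have "y [^] (i mod b) = inv ((y [^] b) [^] (i div b)) \<otimes> z"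
      using z y by (simp add: m_assoc[symmetric])
    ultimately have "y [^] (i mod b) \<in> M"
      using \<open>z \<in> M\<close> M by (simp add: subgroup.m_closed subgroup.m_inv_closed)
    then have "i mod b = 0"
      using b(1) not_less_Least[of "i mod b" "\<lambda>b. 0 < b \<and> y [^] b \<in> M"] unfolding b_def by auto
    then have "z = (y [^] b) [^] int (i div b)" using z y by (simp add: int_pow_int)
    then show "z \<in> generate G {y [^] b}" using y by (auto simp: generate_pow)
  qed
  moreover have "generate G {y [^] b} \<subseteq> M" using b(2) M by (simp add: generate_subgroup_incl)
  ultimately show ?thesis using b(2) by blast
qed

lemma cyclic_group_subgroup_generated_iff:
  assumes "S \<subseteq> carrier G"
  shows "cyclic_group (subgroup_generated G S) \<longleftrightarrow> (\<exists>z \<in> carrier G. generate G S = generate G {z})"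
proof
  assume "cyclic_group (subgroup_generated G S)"
  then obtain z where z: "z \<in> generate G S"
    and "subgroup_generated (subgroup_generated G S) {z} = subgroup_generated G S"
    using assms by (auto simp: cyclic_group_def carrier_subgroup_generated Int_absorb1)
  then have "generate (subgroup_generated G S) {z} = generate G S"
    using assms z by (metis carrier_subgroup_generated Int_absorb1 empty_subsetI insert_subset)
  moreover have "generate (subgroup_generated G S) {z} = generate G {z}"
    using z assms generate_consistent[of "{z}" "generate G S"] generate_is_subgroup
    by (simp add: subgroup_generated_def Int_absorb1)
  ultimately show "\<exists>z \<in> carrier G. generate G S = generate G {z}"
    using z generate_incl[OF assms] by auto
next
  assume "\<exists>z \<in> carrier G. generate G S = generate G {z}"
  then obtain z where "z \<in> carrier G" "generate G S = generate G {z}" by blast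
  then have "subgroup_generated G S = subgroup_generated G {z}"
    using assms by (simp add: subgroup_generated_def Int_absorb1)
  then show "cyclic_group (subgroup_generated G S)" by (simp add: cyclic_group_generated)
qed

lemma generate_singleton_comm:
  assumes "y \<in> carrier G" and "a \<in> generate G {y}" and "b \<in> generate G {y}"
  shows "a \<otimes> b = b \<otimes> a"
proof -
  obtain i j :: int where "a = y [^] i" "b = y [^] j" using assms by (auto simp: generate_pow)
  then show ?thesis using assms(1) by (metis int_pow_mult add.commute)
qed

lemma mem_CycI:
  assumes "finite (carrier G)" and c: "c \<in> carrier G"
    and "\<And>g. g \<in> carrier G \<Longrightarrow> \<exists>y \<in> carrier G. c \<in> generate G {y} \<and> g \<in> generate G {y}"
  shows "c \<in> Cyc G"
  unfolding Cyc_def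
proof (intro CollectI conjI ballI c)
  fix g assume "g \<in> carrier G"
  then obtain y where y: "y \<in> carrier G" "c \<in> generate G {y}" "g \<in> generate G {y}"
    using assms(3) by blast
  have cg: "{c, g} \<subseteq> carrier G" using c \<open>g \<in> carrier G\<close> by auto
  have "generate G {c, g} \<subseteq> generate G {y}"
    using y by (intro generate_subgroup_incl generate_is_subgroup) auto
  then obtain m where "m \<in> generate G {c, g}" "generate G {c, g} = generate G {m}"
    using subgroup_of_generate_singleton_is_generate_singleton[OF assms(1) y(1) generate_is_subgroup[OF cg]]
    by blast
  then show "cyclic_group (subgroup_generated G {c, g})"
    using cyclic_group_subgroup_generated_iff[OF cg] generate_incl[OF cg] by blast
qed

text \<open>Take \<open>y\<close> with \<open>g \<in> \<langle>y\<rangle>\<close> and \<open>\<langle>y\<rangle>\<close> of maximal order: for \<open>c \<in> Cyc G\<close> the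
  cyclic group \<open>\<langle>c, y\<rangle>\<close> contains \<open>\<langle>y\<rangle>\<close>, so equals it.\<close>
lemma ex_generate_singleton_supset_Cyc:
  assumes fin: "finite (carrier G)" and g: "g \<in> carrier G"
  shows "\<exists>y \<in> carrier G. g \<in> generate G {y} \<and> Cyc G \<subseteq> generate G {y}"
proof -
  define P where "P y \<longleftrightarrow> y \<in> carrier G \<and> g \<in> generate G {y}" for y
  have "P g" unfolding P_def using g generate.incl[of g "{g}" G] by auto
  moreover have "card (generate G {y}) < Suc (card (carrier G))" if "P y" for y
    using that fin unfolding P_def by (simp add: card_mono generate_incl le_imp_less_Suc)
  ultimately obtain y where "P y" and y_max: "\<And>z. P z \<Longrightarrow> card (generate G {z}) \<le> card (generate G {y})"
    using ex_has_greatest_nat[of P g "\<lambda>y. card (generate G {y})"] by metis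
  then have y: "y \<in> carrier G" "g \<in> generate G {y}" unfolding P_def by auto
  have "c \<in> generate G {y}" if "c \<in> Cyc G" for c
  proof -
    have cy: "{c, y} \<subseteq> carrier G" "cyclic_group (subgroup_generated G {c, y})"
      using that y(1) unfolding Cyc_def by auto
    then obtain z where z: "z \<in> carrier G" "generate G {c, y} = generate G {z}"
      using cyclic_group_subgroup_generated_iff by blast
    then have "generate G {y} \<subseteq> generate G {z}"
      using generate.incl[of y "{c, y}" G] by (intro generate_subgroup_incl generate_is_subgroup) auto
    moreover have "P z" using z(1) y(2) calculation unfolding P_def by auto
    then have "card (generate G {z}) \<le> card (generate G {y})" by (rule y_max)
    moreover have "finite (generate G {z})"
      using z(1) fin by (auto intro: finite_subset[OF generate_incl])
    ultimately have "generate G {y} = generate G {z}" by (meson card_seteq)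
    then show "c \<in> generate G {y}" using z(2) generate.incl[of c "{c, y}" G] by auto
  qed
  then show ?thesis using y by blast
qed

lemma subgroup_Cyc:
  assumes fin: "finite (carrier G)"
  shows "subgroup (Cyc G) G"
proof -
  have in_Cyc: "c \<in> Cyc G"
    if "c \<in> carrier G"
      and "\<And>y. y \<in> carrier G \<Longrightarrow> Cyc G \<subseteq> generate G {y} \<Longrightarrow> c \<in> generate G {y}" for c
    using that by (metis mem_CycI[OF fin] ex_generate_singleton_supset_Cyc[OF fin])
  show ?thesis
  proof (rule subgroupI)
    show "Cyc G \<subseteq> carrier G" unfolding Cyc_def by auto
    show "Cyc G \<noteq> {}" using in_Cyc[OF one_closed] generate.one by blast
  next
    fix a b assume "a \<in> Cyc G" "b \<in> Cyc G"
    then have "a \<in> carrier G" "b \<in> carrier G" unfolding Cyc_def by auto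
    show "inv a \<in> Cyc G" "a \<otimes> b \<in> Cyc G"
      using \<open>a \<in> Cyc G\<close> \<open>b \<in> Cyc G\<close> \<open>a \<in> carrier G\<close> \<open>b \<in> carrier G\<close>
      by (auto intro!: in_Cyc generate_m_inv_closed generate.eng simp: subset_iff)
  qed
qed

lemma normal_Cyc:
  assumes fin: "finite (carrier G)"
  shows "Cyc G \<lhd> G"
  unfolding normal_inv_iff
proof (intro conjI ballI subgroup_Cyc[OF fin])
  fix x h assume x: "x \<in> carrier G" and h: "h \<in> Cyc G"
  obtain y where y: "y \<in> carrier G" "x \<in> generate G {y}" "Cyc G \<subseteq> generate G {y}"
    using ex_generate_singleton_supset_Cyc[OF fin x] by blast
  have "h \<in> carrier G" using h unfolding Cyc_def by auto
  moreover have "x \<otimes> h = h \<otimes> x" using generate_singleton_comm y h by blast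
  ultimately show "x \<otimes> h \<otimes> inv x \<in> Cyc G" using x h by (simp add: m_assoc)
qed

lemma ex_Cyc_twist_generate_eq:
  assumes fin: "finite (carrier G)" and H: "subgroup H G" and "B \<subseteq> H" and "x \<in> B"
    and gen: "H \<subseteq> generate G (B \<union> (H \<inter> Cyc G))"
  shows "\<exists>c \<in> H \<inter> Cyc G. generate G (insert (x \<otimes> c) (B - {x})) = H"
proof -
  have x: "x \<in> carrier G" using assms(3,4) subgroup.subset[OF H] by blast
  obtain y where y: "y \<in> carrier G" "x \<in> generate G {y}" "Cyc G \<subseteq> generate G {y}"
    using ex_generate_singleton_supset_Cyc[OF fin x] by blast
  obtain m where m: "m \<in> H \<inter> Cyc G" "H \<inter> Cyc G = generate G {m}"
    using subgroup_of_generate_singleton_is_generate_singleton[OF fin y(1)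
        subgroups_Inter_pair[OF H subgroup_Cyc[OF fin]]] y(3)
    by blast
  obtain c where c: "c \<in> generate G {m}" "x \<in> generate G {x \<otimes> c}" "m \<in> generate G {x \<otimes> c}"
    using ex_mult_generates_both[OF fin y(1,2)] m(1) y(3) by blast
  define Y where "Y = insert (x \<otimes> c) (B - {x})"
  have "c \<in> H" "c \<in> carrier G" using c(1) m(2) subgroup.subset[OF H] by auto
  then have YH: "Y \<subseteq> H" unfolding Y_def using assms(3,4) H by (auto intro: subgroup.m_closed)
  then have Y: "Y \<subseteq> carrier G" using subgroup.subset[OF H] by blast
  have xc: "generate G {x \<otimes> c} \<subseteq> generate G Y"
    unfolding Y_def by (rule mono_generate) simp
  have "B \<subseteq> generate G Y"
    using c(2) xc generate.incl[of _ Y G] unfolding Y_def by blast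
  moreover have "H \<inter> Cyc G \<subseteq> generate G Y"
    unfolding m(2) using c(3) xc Y by (intro generate_subgroup_incl generate_is_subgroup) auto
  ultimately have "generate G (B \<union> (H \<inter> Cyc G)) \<subseteq> generate G Y"
    using Y by (intro generate_subgroup_incl generate_is_subgroup) auto
  moreover have "generate G Y \<subseteq> H" using YH H by (rule generate_subgroup_incl)
  ultimately show ?thesis using gen c(1) m(2) unfolding Y_def by blast
qed

lemma subset_generate_Un_inter_if_rcosets_cover:
  assumes N: "subgroup N G" and H: "subgroup H G" and "B \<subseteq> H"
    and cover: "(\<lambda>a. N #> a) ` H \<subseteq> (\<lambda>a. N #> a) ` generate G B"
  shows "H \<subseteq> generate G (B \<union> (H \<inter> N))"
proof
  fix h assume h: "h \<in> H"
  then obtain w where w: "w \<in> generate G B" "N #> h = N #> w" using cover by blast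
  have "w \<in> H" using w(1) \<open>B \<subseteq> H\<close> H generate_subgroup_incl by blast
  have "h \<in> carrier G" "w \<in> carrier G" using h \<open>w \<in> H\<close> subgroup.subset[OF H] by auto
  then have "h \<in> N #> w" using w(2) rcos_self[OF _ N] by metis
  then have "h \<otimes> inv w \<in> N"
    using subgroup.rcos_module_imp[OF N is_group \<open>w \<in> carrier G\<close>] by blast
  moreover have "h \<otimes> inv w \<in> H"
    using h \<open>w \<in> H\<close> H by (simp add: subgroup.m_closed subgroup.m_inv_closed)
  ultimately have "h \<otimes> inv w \<in> generate G (B \<union> (H \<inter> N))" by (simp add: generate.incl)
  moreover have "w \<in> generate G (B \<union> (H \<inter> N))" using w(1) mono_generate[of B] by blast
  ultimately have "h \<otimes> inv w \<otimes> w \<in> generate G (B \<union> (H \<inter> N))" by (rule generate.eng)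
  then show "h \<in> generate G (B \<union> (H \<inter> N))"
    using \<open>h \<in> carrier G\<close> \<open>w \<in> carrier G\<close> by (simp add: m_assoc)
qed

end

definition min_gens_of :: "('a, 'b) monoid_scheme \<Rightarrow> 'a set \<Rightarrow> nat" where
  "min_gens_of G H = (LEAST n. \<exists>S. S \<subseteq> H \<and> finite S \<and> card S = n \<and> generate G S = H)"

lemma min_gens_eq_min_gens_of_carrier: "min_gens G = min_gens_of G (carrier G)"
  by (simp add: min_gens_def min_gens_of_def)

lemma min_gens_of_le:
  assumes "S \<subseteq> H" "finite S" "generate G S = H"
  shows "min_gens_of G H \<le> card S"
  unfolding min_gens_of_def using assms by (intro Least_le exI[of _ S]) simp

lemma (in group) ex_min_generating_set:
  assumes "subgroup H G" "finite H"
  shows "\<exists>S. S \<subseteq> H \<and> finite S \<and> card S = min_gens_of G H \<and> generate G S = H"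
proof -
  have "\<exists>n S. S \<subseteq> H \<and> finite S \<and> card S = n \<and> generate G S = H"
    using assms generate_subgroup_eq by blast
  then show ?thesis unfolding min_gens_of_def by (rule LeastI_ex)
qed

lemma (in group) min_gens_subgroup_generated:
  assumes "T \<subseteq> carrier G"
  shows "min_gens (subgroup_generated G T) = min_gens_of G (generate G T)"
proof -
  have "subgroup_generated G T = G\<lparr>carrier := generate G T\<rparr>"
    using assms by (simp add: subgroup_generated_def Int_absorb1)
  then have gen: "generate (subgroup_generated G T) S = generate G S" if "S \<subseteq> generate G T" for S
    using generate_consistent[OF that generate_is_subgroup[OF assms]] by simp
  have "carrier (subgroup_generated G T) = generate G T"
    using assms by (simp add: carrier_subgroup_generated Int_absorb1)
  then show ?thesis
    unfolding min_gens_def min_gens_of_def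
    by (intro arg_cong[where f = Least] ext) (metis gen)
qed

lemma (in group_hom) min_gens_of_generate_image_le:
  assumes fin: "finite (carrier G)" and T: "T \<subseteq> carrier G"
  shows "min_gens_of H (generate H (h ` T)) \<le> min_gens_of G (generate G T)"
proof -
  obtain S where S: "S \<subseteq> generate G T" "finite S" "card S = min_gens_of G (generate G T)"
      "generate G S = generate G T"
    using G.ex_min_generating_set[OF G.generate_is_subgroup[OF T]]
      finite_subset[OF G.generate_incl[OF T] fin] by blast
  have "S \<subseteq> carrier G" using S(1) G.generate_incl[OF T] by blast
  then have "generate H (h ` S) = generate H (h ` T)"
    using generate_img T S(4) by simp
  moreover have "h ` S \<subseteq> generate H (h ` T)" using generate_img[OF T] S(1) by auto
  ultimately have "min_gens_of H (generate H (h ` T)) \<le> card (h ` S)"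
    using S(2) by (intro min_gens_of_le) auto
  also have "\<dots> \<le> card S" using S(2) by (rule card_image_le)
  finally show ?thesis using S(3) by simp
qed

lemma (in group) min_gens_of_le_one_if_subset_Cyc:
  assumes fin: "finite (carrier G)" and H: "subgroup H G" and "H \<subseteq> Cyc G"
  shows "min_gens_of G H \<le> 1"
proof -
  obtain y where "y \<in> carrier G" "Cyc G \<subseteq> generate G {y}"
    using ex_generate_singleton_supset_Cyc[OF fin one_closed] by blast
  then obtain h where "h \<in> H" "H = generate G {h}"
    using subgroup_of_generate_singleton_is_generate_singleton[OF fin _ H] assms(3) by blast
  then have "min_gens_of G H \<le> card {h}" by (intro min_gens_of_le) auto
  then show ?thesis by simp
qed

locale Cyc_quotient = group +
  assumes finite_carrier: "finite (carrier G)"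
begin

abbreviation Q where "Q \<equiv> G Mod Cyc G"
abbreviation proj where "proj \<equiv> \<lambda>a. Cyc G #> a"

sublocale proj: group_hom G Q proj
  using normal_Cyc[OF finite_carrier]
  by (simp add: group_hom_def group_hom_axioms_def normal.factorgroup_is_group
      normal.r_coset_hom_Mod)

lemma carrier_Q: "carrier Q = proj ` carrier G"
  by (simp add: carrier_FactGroup)

lemma ex_lift_min_generating_set:
  assumes H: "subgroup H G"
  obtains B where "B \<subseteq> H" "finite B" "card B = min_gens_of Q (proj ` H)"
    "H \<subseteq> generate G (B \<union> (H \<inter> Cyc G))"
proof -
  have "H \<subseteq> carrier G" using H by (rule subgroup.subset)
  then have "finite (proj ` H)" using finite_subset[OF _ finite_carrier] by simp
  with proj.subgroup_img_is_subgroup[OF H] have "\<exists>S. S \<subseteq> proj ` H \<and> finite S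
      \<and> card S = min_gens_of Q (proj ` H) \<and> generate Q S = proj ` H"
    by (rule proj.H.ex_min_generating_set)
  then obtain S where
    S: "S \<subseteq> proj ` H" "card S = min_gens_of Q (proj ` H)" "generate Q S = proj ` H"
    by blast
  then obtain B where B: "B \<subseteq> H" "inj_on proj B" "S = proj ` B"
    by (meson subset_image_inj)
  have "B \<subseteq> carrier G" using B(1) \<open>H \<subseteq> carrier G\<close> by blast
  then have "proj ` H \<subseteq> proj ` generate G B"
    using S(3) B(3) proj.generate_img by simp
  then have "H \<subseteq> generate G (B \<union> (H \<inter> Cyc G))"
    using subset_generate_Un_inter_if_rcosets_cover[OF subgroup_Cyc[OF finite_carrier] H B(1)] by simp
  moreover have "finite B" using \<open>B \<subseteq> carrier G\<close> finite_carrier finite_subset by blast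
  ultimately show ?thesis using that B S(2) by (simp add: card_image)
qed

lemma min_gens_of_le_quotient:
  assumes T: "T \<subseteq> carrier G" and two: "2 \<le> min_gens_of G (generate G T)"
  shows "min_gens_of G (generate G T) \<le> min_gens_of Q (generate Q (proj ` T))"
proof -
  define H where "H = generate G T"
  have H: "subgroup H G" unfolding H_def using T by (rule generate_is_subgroup)
  obtain B where B: "B \<subseteq> H" "finite B" "card B = min_gens_of Q (proj ` H)"
    and cover: "H \<subseteq> generate G (B \<union> (H \<inter> Cyc G))"
    using ex_lift_min_generating_set[OF H] .
  show ?thesis
  proof (cases "B = {}")
    case True
    then have "H \<subseteq> Cyc G"
      using cover generate_subgroup_eq[OF subgroups_Inter_pair[OF H subgroup_Cyc[OF finite_carrier]]]
      by auto
    then show ?thesis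
      using min_gens_of_le_one_if_subset_Cyc[OF finite_carrier H] two unfolding H_def by simp
  next
    case False
    then obtain x where "x \<in> B" by blast
    then obtain c where "generate G (insert (x \<otimes> c) (B - {x})) = H" "c \<in> H"
      using ex_Cyc_twist_generate_eq[OF finite_carrier H B(1) _ cover] by blast
    moreover have "insert (x \<otimes> c) (B - {x}) \<subseteq> H"
      using \<open>x \<in> B\<close> \<open>c \<in> H\<close> B(1) subgroup.m_closed[OF H] by blast
    ultimately have "min_gens_of G H \<le> card (insert (x \<otimes> c) (B - {x}))"
      using B(2) by (intro min_gens_of_le) auto
    also have "\<dots> \<le> card B"
      using card_Suc_Diff1[OF B(2) \<open>x \<in> B\<close>] B(2) by (simp add: card_insert_if del: card_Diff_insert)
    finally show ?thesis
      using B(3) proj.generate_img[OF T] unfolding H_def by simp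
  qed
qed

lemma min_gens_of_quotient_eq:
  assumes "T \<subseteq> carrier G" and "2 \<le> min_gens_of G (generate G T)"
  shows "min_gens_of Q (generate Q (proj ` T)) = min_gens_of G (generate G T)"
  using proj.min_gens_of_generate_image_le[OF finite_carrier assms(1)]
    min_gens_of_le_quotient[OF assms] by simp

lemma min_gens_quotient_eq:
  assumes "2 \<le> min_gens G"
  shows "min_gens Q = min_gens G"
proof -
  have "generate G (carrier G) = carrier G" "generate Q (carrier Q) = carrier Q"
    by (simp_all add: generate_subgroup_eq subgroup_self proj.H.generate_subgroup_eq
        proj.H.subgroup_self)
  then show ?thesis
    using min_gens_of_quotient_eq[of "carrier G"] assms
    by (simp add: min_gens_eq_min_gens_of_carrier carrier_Q)
qed

lemma min_gens_subgroup_generated_quotient_iff: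
  assumes "set xs \<subseteq> carrier G" and "2 \<le> length xs"
  shows "min_gens (subgroup_generated Q (proj ` set xs)) = length xs
    \<longleftrightarrow> min_gens (subgroup_generated G (set xs)) = length xs"
proof -
  have "proj ` set xs \<subseteq> carrier Q" using assms(1) by (auto simp: carrier_Q)
  moreover have "set xs \<subseteq> generate G (set xs)" by (auto intro: generate.incl)
  then have "min_gens_of G (generate G (set xs)) \<le> length xs"
    using min_gens_of_le[of "set xs"] card_length[of xs] by (meson List.finite_set order_trans)
  ultimately show ?thesis
    using min_gens_subgroup_generated[OF assms(1)] proj.H.min_gens_subgroup_generated
      proj.min_gens_of_generate_image_le[OF finite_carrier assms(1)]
      min_gens_of_quotient_eq[OF assms(1)] assms(2)
    by (metis le_antisym)
qed

lemma ex_lift_list: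
  assumes "set zs \<subseteq> carrier Q"
  obtains xs where "set xs \<subseteq> carrier G" "zs = map proj xs"
proof -
  have "zs \<in> lists (proj ` carrier G)" using assms by (auto simp: carrier_Q)
  then show ?thesis using that by (auto simp: lists_image)
qed

lemma ex_twist_generate_eq_carrier:
  assumes B: "B \<subseteq> carrier G" and "x \<in> B" and "generate Q (proj ` B) = carrier Q"
  shows "\<exists>c \<in> Cyc G. generate G (insert (x \<otimes> c) (B - {x})) = carrier G"
proof -
  have "proj ` carrier G = proj ` generate G B"
    using assms(3) proj.generate_img[OF B] by (simp add: carrier_Q)
  then have "carrier G \<subseteq> generate G (B \<union> (carrier G \<inter> Cyc G))"
    using subset_generate_Un_inter_if_rcosets_cover[OF subgroup_Cyc[OF finite_carrier] subgroup_self B]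
    by simp
  then show ?thesis
    using ex_Cyc_twist_generate_eq[OF finite_carrier subgroup_self B \<open>x \<in> B\<close>] by blast
qed

lemma k_flexible_quotient_if_k_flexible:
  assumes "2 \<le> k" and flex: "k_flexible G k"
  shows "k_flexible Q k"
proof -
  have "k \<le> min_gens G" using flex by (simp add: k_flexible_def)
  then have d: "min_gens Q = min_gens G" using assms(1) min_gens_quotient_eq by simp
  show ?thesis
    unfolding k_flexible_def
  proof (intro conjI allI impI)
    show "1 \<le> k" "k \<le> min_gens Q" using assms(1) \<open>k \<le> min_gens G\<close> d by simp_all
    fix zs assume zs: "length zs = k \<and> set zs \<subseteq> carrier Q
      \<and> min_gens (subgroup_generated Q (set zs)) = k"
    then obtain xs where xs: "set xs \<subseteq> carrier G" "zs = map proj xs"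
      using ex_lift_list by blast
    then have "min_gens (subgroup_generated G (set xs)) = k"
      using zs assms(1) min_gens_subgroup_generated_quotient_iff[OF xs(1)] by simp
    then obtain ys where ys: "length ys = min_gens G - k" "set ys \<subseteq> carrier G"
      "generate G (set (xs @ ys)) = carrier G"
      using flex xs zs unfolding k_flexible_def by auto
    have "generate Q (set (zs @ map proj ys)) = proj ` generate G (set (xs @ ys))"
      using xs ys(2) proj.generate_img[of "set (xs @ ys)"] by (simp add: image_Un)
    then have "generate Q (set (zs @ map proj ys)) = carrier Q"
      using ys(3) carrier_Q by simp
    moreover have "set (map proj ys) \<subseteq> carrier Q" using ys(2) carrier_Q by auto
    ultimately show "\<exists>ws. length ws = min_gens Q - k \<and> set ws \<subseteq> carrier Q
      \<and> generate Q (set (zs @ ws)) = carrier Q"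
      using ys(1) d by (intro exI[of _ "map proj ys"]) simp
  qed
qed

lemma k_flexible_if_k_flexible_quotient:
  assumes "2 \<le> k" and "k < min_gens G" and flex: "k_flexible Q k"
  shows "k_flexible G k"
  unfolding k_flexible_def
proof (intro conjI allI impI)
  show "1 \<le> k" "k \<le> min_gens G" using assms(1,2) by simp_all
  have d: "min_gens Q = min_gens G" using assms(1,2) min_gens_quotient_eq by simp
  fix xs assume xs: "length xs = k \<and> set xs \<subseteq> carrier G
    \<and> min_gens (subgroup_generated G (set xs)) = k"
  then have "length (map proj xs) = k \<and> set (map proj xs) \<subseteq> carrier Q
      \<and> min_gens (subgroup_generated Q (set (map proj xs))) = k"
    using assms(1) min_gens_subgroup_generated_quotient_iff[of xs] by (auto simp: carrier_Q)
  then have "\<exists>ws. length ws = min_gens Q - k \<and> set ws \<subseteq> carrier Q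
      \<and> generate Q (set (map proj xs @ ws)) = carrier Q"
    using flex unfolding k_flexible_def by blast
  then obtain ws where ws: "length ws = min_gens G - k" "set ws \<subseteq> carrier Q"
    "generate Q (set (map proj xs @ ws)) = carrier Q"
    using d by auto
  then obtain ys0 where ys0: "set ys0 \<subseteq> carrier G" "ws = map proj ys0"
    using ex_lift_list by blast
  with ws(1) assms(2) obtain x rest where x: "ys0 = x # rest" by (cases ys0) auto
  define B where "B = set (xs @ ys0)"
  have "B \<subseteq> carrier G" "x \<in> B" using xs ys0(1) unfolding B_def x by auto
  moreover have "generate Q (proj ` B) = carrier Q"
    using ws(3) ys0(2) unfolding B_def by (simp add: image_Un)
  ultimately obtain c where c: "c \<in> Cyc G" "generate G (insert (x \<otimes> c) (B - {x})) = carrier G"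
    using ex_twist_generate_eq_carrier by blast
  define ys where "ys = (x \<otimes> c) # rest"
  have ys: "set ys \<subseteq> carrier G"
    using ys0(1) c(1) subgroup.subset[OF subgroup_Cyc[OF finite_carrier]] unfolding ys_def x by auto
  have "insert (x \<otimes> c) (B - {x}) \<subseteq> set (xs @ ys)" unfolding B_def ys_def x by auto
  then have "carrier G \<subseteq> generate G (set (xs @ ys))" using c(2) mono_generate by blast
  moreover have "generate G (set (xs @ ys)) \<subseteq> carrier G" using xs ys by (intro generate_incl) auto
  ultimately have "generate G (set (xs @ ys)) = carrier G" by blast
  moreover have "length ys = min_gens G - k" using ws(1) ys0(2) unfolding ys_def x by simp
  ultimately show "\<exists>ys. length ys = min_gens G - k \<and> set ys \<subseteq> carrier G
    \<and> generate G (set (xs @ ys)) = carrier G"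
    using ys by blast
qed

end

theorem lemma2p4:
  fixes G :: "('a, 'b) monoid_scheme" and k :: nat
  assumes "group G" and "finite (carrier G)"
    and "2 \<le> k" and "k < min_gens G"
  shows "k_flexible G k \<longleftrightarrow> k_flexible (G Mod (Cyc G)) k"
proof -
  interpret Cyc_quotient G
    using assms(1,2) by (simp add: Cyc_quotient_def Cyc_quotient_axioms_def)
  show ?thesis
    using k_flexible_quotient_if_k_flexible k_flexible_if_k_flexible_quotient assms(3,4) by blast
qed

end
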